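(* In the extension of $\mathcal{L}_\nu$ by second-order quantification over the set variable, with $[\![\forall X\varphi]\!]_E=\{\omega\in\Omega:\forall F\subseteq\Omega,\ \omega\in[\![\varphi]\!]_F\}$, for every player $i$ and every positive optimality condition $\phi_i$ the formula $\mathit{rat}_{\phi_i}\leftrightarrow\forall X(\Box_iX\rightarrow O_{\phi_i}X)$ is valid, i.e. in every belief model $[\![\mathit{rat}_{\phi_i}]\!]=[\![\forall X(\Box_iX\to O_{\phi_i}X)]\!]$.
   Context: Strategic game $G=(T_1,\dots,T_n,<_1,\dots,<_n)$, $\ge_i$ reflexive closure of $<_i$. Optimality condition for $i$: closed first-order formula over atoms $C(a)$, $a\ge^i_cb$, constant $o$, interpreted in $(G,G',s)$ ($G'$ restriction, $s\in T$, $o\mapsto s$) by $C(x)$ iff $\alpha(x)_j\in G'_j\ \forall j$ and $x\ge^i_zy$ iff $(\alpha(x)_i,\alpha(z)_{-i})\ge_i(\alpha(y)_i,\alpha(z)_{-i})$; positive if every $C(\cdot)$ lies under an even number of negations. Belief model $(\Omega,\bar s_1,\dots,\bar s_n,P_1,\dots,P_n)$, $(G_E)_i=\{\bar s_i(u):u\in E\}$. Semantics: $[\![\mathit{rat}_{\phi_i}]\!]_E=\{\omega:(G,G_{P_i(\omega)},\bar s(\omega))\models\phi_i\}$, $[\![X]\!]_E=E$, $[\![\Box_i\psi]\!]_E=\{\omega:P_i(\omega)\subseteq[\![\psi]\!]_E\}$, $[\![O_{\phi_i}\psi]\!]_E=\{\omega:(G,G_{[\![\psi]\!]_E},\bar s(\omega))\models\phi_i\}$,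 $\to$ and $\leftrightarrow$ interpreted classically. *)

theory Defs
  imports Main
begin

(* Players have type 'p (the player set {1..n} is the universe of 'p),
   strategies have type 's.  A strategic game is given by
   T :: 'p => 's set  (the strategy sets T_i) and
   lt :: 'p => ('p => 's) => ('p => 's) => bool  (the preferences <_i on profiles). *)

type_synonym ('p,'s) profile = "'p \<Rightarrow> 's"

definition profiles :: "('p \<Rightarrow> 's set) \<Rightarrow> ('p,'s) profile set" where
  "profiles T = {x. \<forall>j. x j \<in> T j}"

definition ge :: "('p \<Rightarrow> ('p,'s) profile \<Rightarrow> ('p,'s) profile \<Rightarrow> bool)
    \<Rightarrow> 'p \<Rightarrow> ('p,'s) profile \<Rightarrow> ('p,'s) profile \<Rightarrow> bool" where
  "ge lt i p q \<longleftrightarrow> lt i q p \<or> p = q"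

(* Syntax of optimality conditions: first-order formulas over atoms
   C(a), a >=^i_c b and the constant o. *)
datatype oterm = OVar nat | OConst

datatype ofml =
    CAtom oterm
  | GeAtom oterm oterm oterm   (* GeAtom a c b  stands for  a >=^i_c b *)
  | ONeg ofml
  | OConj ofml ofml
  | ODisj ofml ofml
  | OAll nat ofml
  | OEx nat ofml

fun tvars :: "oterm \<Rightarrow> nat set" where
  "tvars (OVar x) = {x}"
| "tvars OConst = {}"

fun ofv :: "ofml \<Rightarrow> nat set" where
  "ofv (CAtom a) = tvars a"
| "ofv (GeAtom a c b) = tvars a \<union> tvars c \<union> tvars b"
| "ofv (ONeg f) = ofv f"
| "ofv (OConj f g) = ofv f \<union> ofv g"
| "ofv (ODisj f g) = ofv f \<union> ofv g"
| "ofv (OAll x f) = ofv f - {x}"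
| "ofv (OEx x f) = ofv f - {x}"

definition oclosed :: "ofml \<Rightarrow> bool" where
  "oclosed f \<longleftrightarrow> ofv f = {}"

(* pos_pol b f: every C-atom lies under a number of negations whose parity
   (relative to the current polarity b; True = even) is even *)
fun pos_pol :: "bool \<Rightarrow> ofml \<Rightarrow> bool" where
  "pos_pol b (CAtom a) = b"
| "pos_pol b (GeAtom a c d) = True"
| "pos_pol b (ONeg f) = pos_pol (\<not> b) f"
| "pos_pol b (OConj f g) = (pos_pol b f \<and> pos_pol b g)"
| "pos_pol b (ODisj f g) = (pos_pol b f \<and> pos_pol b g)"
| "pos_pol b (OAll x f) = pos_pol b f"
| "pos_pol b (OEx x f) = pos_pol b f"

definition opositive :: "ofml \<Rightarrow> bool" where
  "opositive f \<longleftrightarrow> pos_pol True f"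

fun teval :: "(nat \<Rightarrow> ('p,'s) profile) \<Rightarrow> ('p,'s) profile \<Rightarrow> oterm \<Rightarrow> ('p,'s) profile" where
  "teval \<alpha> s (OVar x) = \<alpha> x"
| "teval \<alpha> s OConst = s"

fun osat :: "('p \<Rightarrow> 's set) \<Rightarrow> ('p \<Rightarrow> ('p,'s) profile \<Rightarrow> ('p,'s) profile \<Rightarrow> bool) \<Rightarrow> 'p
    \<Rightarrow> ('p \<Rightarrow> 's set) \<Rightarrow> ('p,'s) profile \<Rightarrow> (nat \<Rightarrow> ('p,'s) profile) \<Rightarrow> ofml \<Rightarrow> bool" where
  "osat T lt i G' s \<alpha> (CAtom a) = (\<forall>j. teval \<alpha> s a j \<in> G' j)"
| "osat T lt i G' s \<alpha> (GeAtom a c b) =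
     ge lt i ((teval \<alpha> s c)(i := teval \<alpha> s a i)) ((teval \<alpha> s c)(i := teval \<alpha> s b i))"
| "osat T lt i G' s \<alpha> (ONeg f) = (\<not> osat T lt i G' s \<alpha> f)"
| "osat T lt i G' s \<alpha> (OConj f g) = (osat T lt i G' s \<alpha> f \<and> osat T lt i G' s \<alpha> g)"
| "osat T lt i G' s \<alpha> (ODisj f g) = (osat T lt i G' s \<alpha> f \<or> osat T lt i G' s \<alpha> g)"
| "osat T lt i G' s \<alpha> (OAll x f) = (\<forall>t\<in>profiles T. osat T lt i G' s (\<alpha>(x := t)) f)"
| "osat T lt i G' s \<alpha> (OEx x f) = (\<exists>t\<in>profiles T. osat T lt i G' s (\<alpha>(x := t)) f)"

(* (G, G', s) |= phi for a closed formula phi (assignment irrelevant) *)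
definition omodels :: "('p \<Rightarrow> 's set) \<Rightarrow> ('p \<Rightarrow> ('p,'s) profile \<Rightarrow> ('p,'s) profile \<Rightarrow> bool) \<Rightarrow> 'p
    \<Rightarrow> ('p \<Rightarrow> 's set) \<Rightarrow> ('p,'s) profile \<Rightarrow> ofml \<Rightarrow> bool" where
  "omodels T lt i G' s f \<longleftrightarrow> (\<forall>\<alpha>. osat T lt i G' s \<alpha> f)"

definition belief_model :: "('p \<Rightarrow> 's set) \<Rightarrow> 'w set \<Rightarrow> ('p \<Rightarrow> 'w \<Rightarrow> 's) \<Rightarrow> ('p \<Rightarrow> 'w \<Rightarrow> 'w set) \<Rightarrow> bool" where
  "belief_model T \<Omega> sbar P \<longleftrightarrow>
     (\<forall>i. \<forall>\<omega>\<in>\<Omega>. sbar i \<omega> \<in> T i \<and> P i \<omega> \<subseteq> \<Omega>)"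

definition sprof :: "('p \<Rightarrow> 'w \<Rightarrow> 's) \<Rightarrow> 'w \<Rightarrow> ('p,'s) profile" where
  "sprof sbar \<omega> = (\<lambda>j. sbar j \<omega>)"

definition restr :: "('p \<Rightarrow> 'w \<Rightarrow> 's) \<Rightarrow> 'w set \<Rightarrow> 'p \<Rightarrow> 's set" where
  "restr sbar E = (\<lambda>i. sbar i ` E)"

(* Modal language (the relevant fragment of L_nu extended with forall X) *)
datatype 'p mfml =
    Rat 'p ofml
  | SetVar
  | Box 'p "'p mfml"
  | Opt 'p ofml "'p mfml"
  | MNeg "'p mfml"
  | MConj "'p mfml" "'p mfml"
  | MImp "'p mfml" "'p mfml"
  | MIff "'p mfml" "'p mfml"
  | AllX "'p mfml"

fun msem :: "('p \<Rightarrow> 's set) \<Rightarrow> ('p \<Rightarrow> ('p,'s) profile \<Rightarrow> ('p,'s) profile \<Rightarrow> bool)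
    \<Rightarrow> 'w set \<Rightarrow> ('p \<Rightarrow> 'w \<Rightarrow> 's) \<Rightarrow> ('p \<Rightarrow> 'w \<Rightarrow> 'w set) \<Rightarrow> 'w set \<Rightarrow> 'p mfml \<Rightarrow> 'w set" where
  "msem T lt \<Omega> sbar P E (Rat i f) =
     {\<omega>\<in>\<Omega>. omodels T lt i (restr sbar (P i \<omega>)) (sprof sbar \<omega>) f}"
| "msem T lt \<Omega> sbar P E SetVar = E"
| "msem T lt \<Omega> sbar P E (Box i \<psi>) = {\<omega>\<in>\<Omega>. P i \<omega> \<subseteq> msem T lt \<Omega> sbar P E \<psi>}"
| "msem T lt \<Omega> sbar P E (Opt i f \<psi>) =
     {\<omega>\<in>\<Omega>. omodels T lt i (restr sbar (msem T lt \<Omega> sbar P E \<psi>)) (sprof sbar \<omega>) f}"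
| "msem T lt \<Omega> sbar P E (MNeg \<psi>) = \<Omega> - msem T lt \<Omega> sbar P E \<psi>"
| "msem T lt \<Omega> sbar P E (MConj \<psi> \<chi>) = msem T lt \<Omega> sbar P E \<psi> \<inter> msem T lt \<Omega> sbar P E \<chi>"
| "msem T lt \<Omega> sbar P E (MImp \<psi> \<chi>) =
     {\<omega>\<in>\<Omega>. \<omega> \<in> msem T lt \<Omega> sbar P E \<psi> \<longrightarrow> \<omega> \<in> msem T lt \<Omega> sbar P E \<chi>}"
| "msem T lt \<Omega> sbar P E (MIff \<psi> \<chi>) =
     {\<omega>\<in>\<Omega>. \<omega> \<in> msem T lt \<Omega> sbar P E \<psi> \<longleftrightarrow> \<omega> \<in> msem T lt \<Omega> sbar P E \<chi>}"
| "msem T lt \<Omega> sbar P E (AllX \<psi>) = {\<omega>\<in>\<Omega>. \<forall>F. F \<subseteq> \<Omega> \<longrightarrow> \<omega> \<in> msem T lt \<Omega> sbar P F \<psi>}"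

end

theory Submission
  imports Defs
begin

(* An optimality condition phi_i is evaluated against the restricted
   game G_F of the strategies occurring in a set of states F.  If phi_i is positive,
   every C-atom occurs positively, so enlarging G_F can only make phi_i truer:
   satisfaction is monotone in F.  Hence, for a state w with belief set P_i(w),
     "phi_i holds for G_{P_i(w)}"  (this is rat_{phi_i})
   is equivalent to
     "phi_i holds for G_F for every F with P_i(w) \<subseteq> F"  (this is forall X (Box_i X -> O X)),
   the left-to-right direction by monotonicity and the converse by taking F = P_i(w),
   which is a legitimate value of X because belief sets lie inside Omega. *)

text \<open>Both directions are proved together because negation swaps them.\<close>

lemma osat_polarity_mono:
  assumes sub: "\<And>j. G1 j \<subseteq> G2 j"
    and "pos_pol b f"
  shows "(b \<longrightarrow> osat T lt i G1 s \<alpha> f \<longrightarrow> osat T lt i G2 s \<alpha> f)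
       \<and> (\<not> b \<longrightarrow> osat T lt i G2 s \<alpha> f \<longrightarrow> osat T lt i G1 s \<alpha> f)"
  using assms(2)
proof (induction f arbitrary: b \<alpha>)
  case (CAtom a)
  then show ?case using sub by auto
next
  case (ONeg f)
  then show ?case by (cases b) auto
next
  case (OAll x f)
  then show ?case by simp blast
next
  case (OEx x f)
  then show ?case by simp blast
qed auto

lemma omodels_positive_mono:
  assumes "\<And>j. G1 j \<subseteq> G2 j"
    and "opositive f"
    and "omodels T lt i G1 s f"
  shows "omodels T lt i G2 s f"
  using assms osat_polarity_mono[of G1 G2 True f]
  by (auto simp: omodels_def opositive_def)

lemma restr_mono:
  assumes "E1 \<subseteq> E2"
  shows "restr sbar E1 j \<subseteq> restr sbar E2 j"
  using assms by (auto simp: restr_def)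

lemma positive_upward_closure:
  assumes "opositive f" and "B \<subseteq> \<Omega>"
  shows "omodels T lt i (restr sbar B) s f
     \<longleftrightarrow> (\<forall>F. F \<subseteq> \<Omega> \<longrightarrow> B \<subseteq> F \<longrightarrow> omodels T lt i (restr sbar F) s f)"
proof
  assume "omodels T lt i (restr sbar B) s f"
  moreover have "omodels T lt i (restr sbar F) s f" if "B \<subseteq> F" for F
    using omodels_positive_mono[OF restr_mono[OF that] assms(1)] calculation .
  ultimately show "\<forall>F. F \<subseteq> \<Omega> \<longrightarrow> B \<subseteq> F \<longrightarrow> omodels T lt i (restr sbar F) s f"
    by blast
next
  assume "\<forall>F. F \<subseteq> \<Omega> \<longrightarrow> B \<subseteq> F \<longrightarrow> omodels T lt i (restr sbar F) s f"
  then show "omodels T lt i (restr sbar B) s f" using assms(2) by blast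
qed

lemma msem_all_believed_opt:
  "msem T lt \<Omega> sbar P E (AllX (MImp (Box i SetVar) (Opt i \<phi> SetVar)))
   = {\<omega>\<in>\<Omega>. \<forall>F. F \<subseteq> \<Omega> \<longrightarrow> P i \<omega> \<subseteq> F
                 \<longrightarrow> omodels T lt i (restr sbar F) (sprof sbar \<omega>) \<phi>}"
  by auto

theorem mainTheorem13:
  fixes T :: "'p \<Rightarrow> 's set"
    and lt :: "'p \<Rightarrow> ('p \<Rightarrow> 's) \<Rightarrow> ('p \<Rightarrow> 's) \<Rightarrow> bool"
    and \<Omega> :: "'w set"
    and sbar :: "'p \<Rightarrow> 'w \<Rightarrow> 's"
    and P :: "'p \<Rightarrow> 'w \<Rightarrow> 'w set"
    and i :: 'p
    and \<phi> :: ofml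
    and E :: "'w set"
  assumes "belief_model T \<Omega> sbar P"
    and "oclosed \<phi>"
    and "opositive \<phi>"
  shows "msem T lt \<Omega> sbar P E (MIff (Rat i \<phi>) (AllX (MImp (Box i SetVar) (Opt i \<phi> SetVar)))) = \<Omega>
         \<and> msem T lt \<Omega> sbar P E (Rat i \<phi>)
         = msem T lt \<Omega> sbar P E (AllX (MImp (Box i SetVar) (Opt i \<phi> SetVar)))"
proof -
  let ?rat = "Rat i \<phi>" and ?all = "AllX (MImp (Box i SetVar) (Opt i \<phi> SetVar))"
  have beliefs_in_\<Omega>: "P i \<omega> \<subseteq> \<Omega>" if "\<omega> \<in> \<Omega>" for \<omega>
    using assms(1) that by (auto simp: belief_model_def)
  have same: "msem T lt \<Omega> sbar P E ?rat = msem T lt \<Omega> sbar P E ?all"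
    unfolding msem_all_believed_opt
    using positive_upward_closure[OF assms(3) beliefs_in_\<Omega>,
        where T = T and lt = lt and i = i and sbar = sbar] by auto
  moreover have "msem T lt \<Omega> sbar P E ?rat \<subseteq> \<Omega>" by auto
  ultimately have "msem T lt \<Omega> sbar P E (MIff ?rat ?all) = \<Omega>"
    by (simp only: msem.simps(8)) blast
  with same show ?thesis by blast
qed

end
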